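(* Let $s$ be a schedule, $n\ge 2$, and $t_1,\dots,t_n$ distinct transactions of $s$. Suppose there are operations $p_k,q_k\in t_k$ ($k=1,\dots,n$), all accessing the same object $x$, such that $(p_k,q_{k+1})$ is a conflicting pair for $k=1,\dots,n-1$ and $(p_n,q_1)$ is a conflicting pair (so the conflict graph contains the cycle $t_1\to t_2\to\cdots\to t_n\to t_1$ with all edges on $x$). Then there exist two distinct transactions $t_a,t_b\in\{t_1,\dots,t_n\}$ such that the conflict graph contains both an edge on $x$ from $t_a$ to $t_b$ and an edge on $x$ from $t_b$ to $t_a$. *)

theory Defs
  imports Main
begin

text \<open>A schedule is a finite sequence
  of operations; an operation of the schedule is identified by its position
  in the sequence (so repeated identical operations are distinct events).\<close>

datatype action = Read | Write

datatype ('t, 'x) operation = Op (op_trans: 't) (op_action: action) (op_obj: 'x)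

type_synonym ('t, 'x) schedule = "('t, 'x) operation list"

definition transactions :: "('t, 'x) schedule \<Rightarrow> 't set" where
  "transactions s = op_trans ` set s"

definition op_of :: "('t, 'x) schedule \<Rightarrow> nat \<Rightarrow> 't \<Rightarrow> 'x \<Rightarrow> bool" where
  "op_of s i t x \<longleftrightarrow> i < length s \<and> op_trans (s ! i) = t \<and> op_obj (s ! i) = x"

definition conflicting :: "('t, 'x) schedule \<Rightarrow> nat \<Rightarrow> nat \<Rightarrow> bool" where
  "conflicting s i j \<longleftrightarrow> i < j \<and> j < length s
     \<and> op_trans (s ! i) \<noteq> op_trans (s ! j)
     \<and> op_obj (s ! i) = op_obj (s ! j)
     \<and> (op_action (s ! i) = Write \<or> op_action (s ! j) = Write)"

definition conflict_graph :: "('t, 'x) schedule \<Rightarrow> ('t \<times> 'x \<times> 't) set" where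
  "conflict_graph s = {(t, x, t'). \<exists>i j. conflicting s i j \<and> op_of s i t x \<and> op_of s j t' x}"

end

theory Submission
  imports Defs
begin

text \<open>Let \<open>q\<^sub>c\<close> be the earliest of the operations \<open>q\<^sub>k\<close> and let \<open>(p\<^sub>a, q\<^sub>c)\<close> be the conflict
  entering \<open>t\<^sub>c\<close>. If \<open>q\<^sub>c\<close> is a write, it precedes \<open>q\<^sub>a\<close> and conflicts with it, so \<open>t\<^sub>a\<close> and
  \<open>t\<^sub>c\<close> have edges on \<open>x\<close> in both directions. Otherwise \<open>p\<^sub>a\<close> is a write; for the conflict
  \<open>(p\<^sub>b, q\<^sub>a)\<close> entering \<open>t\<^sub>a\<close> we have \<open>p\<^sub>a < q\<^sub>c \<le> q\<^sub>b\<close>, so \<open>p\<^sub>a\<close> conflicts with \<open>q\<^sub>b\<close>, and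
  \<open>t\<^sub>a\<close>, \<open>t\<^sub>b\<close> have edges on \<open>x\<close> in both directions.\<close>

lemma conflict_graphI:
  assumes "conflicting s i j" "op_of s i t x" "op_of s j t' x"
  shows "(t, x, t') \<in> conflict_graph s"
  using assms unfolding conflict_graph_def by blast

lemma conflictingI:
  assumes "op_of s i t x" "op_of s j t' x" "t \<noteq> t'" "i < j"
    and "op_action (s ! i) = Write \<or> op_action (s ! j) = Write"
  shows "conflicting s i j"
  using assms unfolding conflicting_def op_of_def by auto

lemma conflict_graph_two_cycle_if_every_node_entered:
  assumes "finite K" "K \<noteq> {}" "inj_on t K"
    and ops: "\<And>k. k \<in> K \<Longrightarrow> op_of s (p k) (t k) x \<and> op_of s (q k) (t k) x"
    and entered: "\<And>k. k \<in> K \<Longrightarrow> \<exists>j\<in>K. j \<noteq> k \<and> conflicting s (p j) (q k)"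
  shows "\<exists>a\<in>K. \<exists>b\<in>K. t a \<noteq> t b
           \<and> (t a, x, t b) \<in> conflict_graph s \<and> (t b, x, t a) \<in> conflict_graph s"
proof -
  define c where "c = arg_min_on q K"
  have c: "c \<in> K" and q_c_least: "\<And>k. k \<in> K \<Longrightarrow> q c \<le> q k"
    using arg_min_if_finite[OF \<open>finite K\<close> \<open>K \<noteq> {}\<close>, of q] unfolding c_def by force+
  obtain a where a: "a \<in> K" "a \<noteq> c" and pa_qc: "conflicting s (p a) (q c)"
    using entered[OF c] by blast
  obtain b where b: "b \<in> K" "b \<noteq> a" and pb_qa: "conflicting s (p b) (q a)"
    using entered[OF a(1)] by blast
  have t_ac: "t a \<noteq> t c" and t_ab: "t a \<noteq> t b"
    using a b c \<open>inj_on t K\<close> by (metis inj_onD)+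
  note ops_a = ops[OF a(1)] and ops_b = ops[OF b(1)] and ops_c = ops[OF c]
  show ?thesis
  proof (cases "op_action (s ! q c) = Write")
    case True
    have "q c \<noteq> q a"
      using ops_a ops_c t_ac unfolding op_of_def by auto
    with q_c_least[OF a(1)] have "conflicting s (q c) (q a)"
      using True ops_a ops_c t_ac by (intro conflictingI[of s "q c" "t c" x _ "t a"]) auto
    then have "(t c, x, t a) \<in> conflict_graph s"
      using ops_a ops_c by (blast intro: conflict_graphI)
    moreover have "(t a, x, t c) \<in> conflict_graph s"
      using pa_qc ops_a ops_c by (blast intro: conflict_graphI)
    ultimately show ?thesis
      using a c t_ac by blast
  next
    case False
    with pa_qc have "op_action (s ! p a) = Write"
      unfolding conflicting_def by auto
    moreover have "p a < q b"
      using pa_qc q_c_least[OF b(1)] unfolding conflicting_def by auto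
    ultimately have "conflicting s (p a) (q b)"
      using ops_a ops_b t_ab by (intro conflictingI[of s "p a" "t a" x _ "t b"]) auto
    then have "(t a, x, t b) \<in> conflict_graph s"
      using ops_a ops_b by (blast intro: conflict_graphI)
    moreover have "(t b, x, t a) \<in> conflict_graph s"
      using pb_qa ops_a ops_b by (blast intro: conflict_graphI)
    ultimately show ?thesis
      using a b t_ab by blast
  qed
qed

lemma cycle_entered_from_predecessor:
  fixes n k :: nat
  assumes "n \<ge> 2"
    and "\<And>k. k \<in> {1..<n} \<Longrightarrow> conflicting s (p k) (q (k + 1))"
    and "conflicting s (p n) (q 1)"
    and k: "k \<in> {1..n}"
  shows "\<exists>j\<in>{1..n}. j \<noteq> k \<and> conflicting s (p j) (q k)"
proof (cases "k = 1")
  case True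
  then show ?thesis
    using assms(1,3) by (intro bexI[of _ n]) auto
next
  case False
  then have "k - 1 \<in> {1..<n}" "k - 1 + 1 = k"
    using k by auto
  then show ?thesis
    using assms(2)[of "k - 1"] False k by (intro bexI[of _ "k - 1"]) auto
qed

theorem theorem2:
  fixes s :: "('t, 'x) schedule" and n :: nat and t :: "nat \<Rightarrow> 't"
    and p q :: "nat \<Rightarrow> nat" and x :: 'x
  assumes "n \<ge> 2"
    and "inj_on t {1..n}"
    and "\<And>k. k \<in> {1..n} \<Longrightarrow> t k \<in> transactions s"
    and "\<And>k. k \<in> {1..n} \<Longrightarrow> op_of s (p k) (t k) x \<and> op_of s (q k) (t k) x"
    and "\<And>k. k \<in> {1..<n} \<Longrightarrow> conflicting s (p k) (q (k + 1))"
    and "conflicting s (p n) (q 1)"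
  shows "\<exists>a\<in>{1..n}. \<exists>b\<in>{1..n}. t a \<noteq> t b
           \<and> (t a, x, t b) \<in> conflict_graph s \<and> (t b, x, t a) \<in> conflict_graph s"
proof (rule conflict_graph_two_cycle_if_every_node_entered)
  show "{1..n} \<noteq> {}"
    using \<open>n \<ge> 2\<close> by simp
  show "\<exists>j\<in>{1..n}. j \<noteq> k \<and> conflicting s (p j) (q k)" if "k \<in> {1..n}" for k
    using cycle_entered_from_predecessor[OF assms(1,5,6) that] by blast
qed (use assms(2,4) in auto)

end
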